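(* Let $\lambda\in\mathbb{C}^*$, $\alpha\in\mathbb{C}$, $t\in\{1,-1\}$. Let $W=\mathbb{C}[x]\mathbf{1}_{\bar0}\oplus\mathbb{C}[y]\mathbf{1}_{\bar1}$ be the $\mathbb{Z}_2$-graded space with $W_{\bar0}=\mathbb{C}[x]\mathbf{1}_{\bar0}$, $W_{\bar1}=\mathbb{C}[y]\mathbf{1}_{\bar1}$ (writing $f(x)$ for $f(x)\mathbf{1}_{\bar0}$ and $g(y)$ for $g(y)\mathbf{1}_{\bar1}$). For $m\in\mathbb{Z}$, $r\in\frac12+\mathbb{Z}$, $p\in\frac12\mathbb{Z}$, $f\in\mathbb{C}[x]$, $g\in\mathbb{C}[y]$ define $$L_mf(x)=\lambda^m(x+m\alpha)f(x+m),\quad L_mg(y)=\lambda^m\big(y+m(\alpha+\tfrac12)\big)g(y+m),$$ $$I_rf(x)=-2t^{2r}\lambda^r\alpha f(x+r),\quad I_rg(y)=t^{2r}\lambda^r(1-2\alpha)g(y+r),$$ $$G_pf(x)=t^{2p}\lambda^pf(y+p),\quad G_pg(y)=(-t)^{2p}\lambda^p(x+2p\alpha)g(x+p).$$ Then $W$ is a $\mathcal{T}$-module under this action (denoted $\mathcal{N}_t(\lambda,\alpha)$), and it is free of rank $2$ as a module over $\mathcal{U}(\mathbb{C}L_0)$.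
   Context: The twisted $N=2$ superconformal algebra $\mathcal{T}$ is the Lie superalgebra over $\mathbb{C}$ with basis $\{L_m, I_r, G_p\mid m\in\mathbb{Z}, r\in\frac12+\mathbb{Z}, p\in\frac12\mathbb{Z}\}$, even part spanned by the $L_m,I_r$, odd part spanned by the $G_p$, and with the only nonzero brackets $[L_m,L_n]=(m-n)L_{m+n}$, $[L_m,I_r]=-rI_{m+r}$, $[L_m,G_p]=(\frac m2-p)G_{m+p}$, $[I_r,G_p]=G_{r+p}$, and $[G_p,G_q]=(-1)^{2p}2L_{p+q}$ if $p+q\in\mathbb{Z}$, $[G_p,G_q]=(-1)^{2p+1}(p-q)I_{p+q}$ if $p+q\in\frac12+\mathbb{Z}$. A $\mathcal{T}$-module is a $\mathbb{Z}_2$-graded space with $\mathcal{T}_{\bar i}V_{\bar j}\subseteq V_{\bar i+\bar j}$ and $x(yv)-(-1)^{|x||y|}y(xv)=[x,y]v$. For $p\in\frac12\mathbb{Z}$, $\lambda^p$ means $(\lambda^{1/2})^{2p}$ for a fixed square root $\lambda^{1/2}$. *)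

theory Defs
  imports "HOL-Computational_Algebra.Polynomial"
begin

text \<open>Basis of the twisted N=2 superconformal algebra T.
  Half-integer indices are encoded by twice their value:
  Lb m = L_m (m integer), Ib k = I_(k/2) (k must be odd), Gb k = G_(k/2) (k any integer).\<close>

datatype tbasis = Lb int | Ib int | Gb int

fun tvalid :: "tbasis \<Rightarrow> bool" where
  "tvalid (Lb m) = True"
| "tvalid (Ib k) = odd k"
| "tvalid (Gb k) = True"

fun todd :: "tbasis \<Rightarrow> bool" where
  "todd (Gb k) = True"
| "todd _ = False"

text \<open>The bracket [a,b] as a linear combination of basis elements
  (coefficient, basis element); the listed brackets of the paper, extended
  by super-antisymmetry, all others zero.\<close>

fun tbr :: "tbasis \<Rightarrow> tbasis \<Rightarrow> (complex \<times> tbasis) list" where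
  "tbr (Lb m) (Lb n) = [(of_int (m - n), Lb (m + n))]"
| "tbr (Lb m) (Ib k) = [(- of_int k / 2, Ib (2 * m + k))]"
| "tbr (Ib k) (Lb m) = [(of_int k / 2, Ib (2 * m + k))]"
| "tbr (Lb m) (Gb k) = [((of_int m - of_int k) / 2, Gb (2 * m + k))]"
| "tbr (Gb k) (Lb m) = [(- (of_int m - of_int k) / 2, Gb (2 * m + k))]"
| "tbr (Ib k) (Gb l) = [(1, Gb (k + l))]"
| "tbr (Gb l) (Ib k) = [(-1, Gb (k + l))]"
| "tbr (Ib k) (Ib l) = []"
| "tbr (Gb k) (Gb l) =
     (if even (k + l) then [((-1) powi k * 2, Lb ((k + l) div 2))]
      else [((-1) powi (k + 1) * of_int (k - l) / 2, Ib (k + l))])"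

text \<open>The space W = C[x] 1_0 (+) C[y] 1_1, an element (f, g) meaning f(x) 1_0 + g(y) 1_1.\<close>

type_synonym wsp = "complex poly \<times> complex poly"

definition wadd :: "wsp \<Rightarrow> wsp \<Rightarrow> wsp" where
  "wadd v w = (fst v + fst w, snd v + snd w)"

definition wsmul :: "complex \<Rightarrow> wsp \<Rightarrow> wsp" where
  "wsmul c v = (smult c (fst v), smult c (snd v))"

definition wzero :: wsp where "wzero = (0, 0)"

definition weven :: "wsp \<Rightarrow> bool" where "weven v \<longleftrightarrow> snd v = 0"
definition wodd :: "wsp \<Rightarrow> bool" where "wodd v \<longleftrightarrow> fst v = 0"

definition shift :: "complex \<Rightarrow> complex poly \<Rightarrow> complex poly" where
  "shift h f = pcompose f [:h, 1:]"

text \<open>The action of N_t(lambda, alpha); s is the fixed square root of lambda,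
  so lambda^p = s^(2p).\<close>

fun nact :: "complex \<Rightarrow> complex \<Rightarrow> complex \<Rightarrow> tbasis \<Rightarrow> wsp \<Rightarrow> wsp" where
  "nact s \<alpha> t (Lb m) (f, g) =
     (smult (s powi (2 * m)) ([:of_int m * \<alpha>, 1:] * shift (of_int m) f),
      smult (s powi (2 * m)) ([:of_int m * (\<alpha> + 1/2), 1:] * shift (of_int m) g))"
| "nact s \<alpha> t (Ib k) (f, g) =
     (smult (- 2 * t powi k * s powi k * \<alpha>) (shift (of_int k / 2) f),
      smult (t powi k * s powi k * (1 - 2 * \<alpha>)) (shift (of_int k / 2) g))"
| "nact s \<alpha> t (Gb k) (f, g) =
     (smult ((- t) powi k * s powi k) ([:of_int k * \<alpha>, 1:] * shift (of_int k / 2) g),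
      smult (t powi k * s powi k) (shift (of_int k / 2) f))"

definition is_T_module :: "(tbasis \<Rightarrow> wsp \<Rightarrow> wsp) \<Rightarrow> bool" where
  "is_T_module \<rho> \<longleftrightarrow>
     (\<forall>a. tvalid a \<longrightarrow>
        (\<forall>v w. \<rho> a (wadd v w) = wadd (\<rho> a v) (\<rho> a w)) \<and>
        (\<forall>c v. \<rho> a (wsmul c v) = wsmul c (\<rho> a v)) \<and>
        (\<forall>v. weven v \<longrightarrow> (if todd a then wodd (\<rho> a v) else weven (\<rho> a v))) \<and>
        (\<forall>v. wodd v \<longrightarrow> (if todd a then weven (\<rho> a v) else wodd (\<rho> a v)))) \<and>
     (\<forall>a b v. tvalid a \<longrightarrow> tvalid b \<longrightarrow>
        wadd (\<rho> a (\<rho> b v))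
             (wsmul (- (if todd a \<and> todd b then -1 else 1)) (\<rho> b (\<rho> a v)))
        = foldr (\<lambda>(c, e) acc. wadd (wsmul c (\<rho> e v)) acc) (tbr a b) wzero)"

text \<open>Action of U(C L_0) = C[L_0]: P(L_0) v.\<close>
definition uL0_act :: "(tbasis \<Rightarrow> wsp \<Rightarrow> wsp) \<Rightarrow> complex poly \<Rightarrow> wsp \<Rightarrow> wsp" where
  "uL0_act \<rho> P v = foldr (\<lambda>i acc. wadd (wsmul (coeff P i) ((\<rho> (Lb 0) ^^ i) v)) acc)
                      [0..<Suc (degree P)] wzero"

definition free_rank2_UL0 :: "(tbasis \<Rightarrow> wsp \<Rightarrow> wsp) \<Rightarrow> bool" where
  "free_rank2_UL0 \<rho> \<longleftrightarrow>
     (\<exists>w1 w2. \<forall>v. \<exists>!PQ. v = wadd (uL0_act \<rho> (fst PQ) w1) (uL0_act \<rho> (snd PQ) w2))"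

end

theory Submission
  imports Defs
begin

(* Every generator acts on C[x] and C[y] as a polynomial multiplier followed by a shift
   f(x) \<mapsto> f(x + h), with a scalar factor t^(2p) lambda^p.  Shifts compose additively
   and lambda-powers multiply, so each super-commutation relation of T reduces to an
   identity between the scalar polynomial multipliers, checked pointwise; since t^2 = 1,
   the signs t^(2p) only depend on the parity of 2p.  L_0 acts as multiplication by the
   variable on both summands, so U(C L_0) = C[L_0] acts as C[x] resp. C[y], and
   1_0, 1_1 is a basis over it. *)

lemma power_int_eq_if_square_eq_1:
  fixes t :: "'a :: division_ring"
  assumes "t ^ 2 = 1"
  shows "t powi k = (if even k then 1 else t)"
proof -
  have t_nonzero: "t \<noteq> 0" using assms by auto
  have even_power: "t powi (2 * j) = 1" for j
    using assms by (simp add: power_int_mult)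
  show ?thesis
  proof (cases "even k")
    case True
    then show ?thesis using even_power by (auto elim: evenE)
  next
    case False
    then obtain j where "k = 2 * j + 1" by (auto elim: oddE)
    then show ?thesis using False even_power t_nonzero by (simp add: power_int_add)
  qed
qed

lemma poly_eq_by_eval:
  fixes p q :: "'a :: {idom, ring_char_0} poly"
  assumes "\<And>x. poly p x = poly q x"
  shows "p = q"
  using assms by (simp add: poly_eq_poly_eq_iff[symmetric] fun_eq_iff)

lemma poly_shift [simp]: "poly (shift h f) x = poly f (x + h)"
  by (simp add: shift_def poly_pcompose add.commute)

lemma shift_add: "shift h (f + g) = shift h f + shift h g"
  by (simp add: shift_def pcompose_add)

lemma shift_zero [simp]: "shift h 0 = 0"
  by (simp add: shift_def)

lemma shift_by_0 [simp]: "shift 0 f = f"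
  by (simp add: shift_def pcompose_idR)

lemma wsp_eqI:
  fixes v w :: wsp
  assumes "\<And>x. poly (fst v) x = poly (fst w) x" and "\<And>y. poly (snd v) y = poly (snd w) y"
  shows "v = w"
  using assms by (auto intro!: prod_eqI poly_eq_by_eval)

lemma wadd_wzero [simp]: "wadd v wzero = v"
  by (simp add: wadd_def wzero_def)

lemma wsmul_one [simp]: "wsmul 1 v = v"
  by (simp add: wsmul_def)

lemma wsmul_wsmul [simp]: "wsmul a (wsmul b v) = wsmul (a * b) v"
  by (simp add: wsmul_def)

lemma nact_wadd: "nact s \<alpha> t a (wadd v w) = wadd (nact s \<alpha> t a v) (nact s \<alpha> t a w)"
  by (cases a; cases v; cases w) (simp_all add: wadd_def shift_add algebra_simps smult_add_right)

lemma nact_wsmul: "nact s \<alpha> t a (wsmul c v) = wsmul c (nact s \<alpha> t a v)"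
  by (cases a; cases v) (rule wsp_eqI; simp add: wsmul_def algebra_simps)+

lemma nact_weven:
  "weven v \<Longrightarrow> (if todd a then wodd (nact s \<alpha> t a v) else weven (nact s \<alpha> t a v))"
  by (cases a; cases v) (simp_all add: weven_def wodd_def)

lemma nact_wodd:
  "wodd v \<Longrightarrow> (if todd a then weven (nact s \<alpha> t a v) else wodd (nact s \<alpha> t a v))"
  by (cases a; cases v) (simp_all add: weven_def wodd_def)

definition super_commutator ::
    "(tbasis \<Rightarrow> wsp \<Rightarrow> wsp) \<Rightarrow> tbasis \<Rightarrow> tbasis \<Rightarrow> wsp \<Rightarrow> wsp" where
  "super_commutator \<rho> a b v =
     wadd (\<rho> a (\<rho> b v)) (wsmul (- (if todd a \<and> todd b then -1 else 1)) (\<rho> b (\<rho> a v)))"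

lemma super_commutator_swap:
  assumes "\<not> (todd a \<and> todd b)"
  shows "super_commutator \<rho> b a v = wsmul (- 1) (super_commutator \<rho> a b v)"
  using assms by (auto simp: super_commutator_def wadd_def wsmul_def)

context
  fixes s \<alpha> t :: complex
  assumes s_nonzero: "s \<noteq> 0" and t_square: "t ^ 2 = 1"
begin

lemma s_powi_add: "s powi (m + n) = s powi m * s powi n"
  using s_nonzero by (simp add: power_int_add)

lemma t_powi: "t powi k = (if even k then 1 else t)"
  using t_square by (rule power_int_eq_if_square_eq_1)

lemma minus_t_powi: "(- t) powi k = (if even k then 1 else - t)"
  using t_square by (simp add: power_int_eq_if_square_eq_1)

lemma t_times_t [simp]: "t * t = 1" "t * (t * z) = z"
  using t_square by (simp_all add: power2_eq_square flip: mult.assoc)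

lemma super_commutator_L_L:
  "super_commutator (nact s \<alpha> t) (Lb m) (Lb n) v =
     wsmul (of_int (m - n)) (nact s \<alpha> t (Lb (m + n)) v)"
  by (cases v) (rule wsp_eqI; simp add: super_commutator_def wadd_def wsmul_def s_powi_add
      add_divide_distrib; simp add: field_simps)

lemma super_commutator_L_I:
  "super_commutator (nact s \<alpha> t) (Lb m) (Ib k) v =
     wsmul (- of_int k / 2) (nact s \<alpha> t (Ib (2 * m + k)) v)"
  by (cases v) (rule wsp_eqI; simp add: super_commutator_def wadd_def wsmul_def s_powi_add t_powi
      add_divide_distrib; simp add: field_simps)

lemma super_commutator_L_G:
  "super_commutator (nact s \<alpha> t) (Lb m) (Gb k) v =
     wsmul ((of_int m - of_int k) / 2) (nact s \<alpha> t (Gb (2 * m + k)) v)"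
  by (cases v) (rule wsp_eqI; simp add: super_commutator_def wadd_def wsmul_def s_powi_add t_powi
      minus_t_powi add_divide_distrib; simp add: field_simps)

lemma super_commutator_I_I: "super_commutator (nact s \<alpha> t) (Ib k) (Ib l) v = wzero"
  by (cases v) (rule wsp_eqI; simp add: super_commutator_def wadd_def wsmul_def wzero_def s_powi_add
      t_powi add_divide_distrib; simp add: field_simps)

lemma super_commutator_I_G:
  assumes "odd k"
  shows "super_commutator (nact s \<alpha> t) (Ib k) (Gb l) v = nact s \<alpha> t (Gb (k + l)) v"
  using assms by (cases v) (rule wsp_eqI; simp add: super_commutator_def wadd_def wsmul_def
      s_powi_add t_powi minus_t_powi add_divide_distrib; simp add: field_simps)

lemma super_commutator_G_G_even:
  assumes "k + l = 2 * m"
  shows "super_commutator (nact s \<alpha> t) (Gb k) (Gb l) v =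
           wsmul ((-1) powi k * 2) (nact s \<alpha> t (Lb m) v)"
proof -
  have m_half_sum: "complex_of_int m = of_int k / 2 + of_int l / 2"
    using arg_cong[OF assms, of complex_of_int] by (simp add: field_simps)
  have s_powi_double_m: "s powi (2 * m) = s powi k * s powi l"
    by (simp flip: assms add: s_powi_add)
  have same_parity: "even l \<longleftrightarrow> even k"
    using assms by presburger
  show ?thesis
    by (cases v) (rule wsp_eqI; simp only: nact.simps m_half_sum s_powi_double_m;
        simp add: same_parity super_commutator_def wadd_def wsmul_def s_powi_add t_powi minus_t_powi
        power_int_eq_if_square_eq_1 add_divide_distrib; simp add: field_simps)
qed

lemma super_commutator_G_G_odd:
  assumes "odd (k + l)"
  shows "super_commutator (nact s \<alpha> t) (Gb k) (Gb l) v =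
           wsmul ((-1) powi (k + 1) * of_int (k - l) / 2) (nact s \<alpha> t (Ib (k + l)) v)"
  using assms by (cases v) (rule wsp_eqI; simp add: super_commutator_def wadd_def wsmul_def
      s_powi_add t_powi minus_t_powi power_int_eq_if_square_eq_1 add_divide_distrib;
      simp add: field_simps)

lemma super_commutator_I_L:
  "super_commutator (nact s \<alpha> t) (Ib k) (Lb m) v =
     wsmul (of_int k / 2) (nact s \<alpha> t (Ib (2 * m + k)) v)"
  by (simp add: super_commutator_swap[of "Lb m"] super_commutator_L_I)

lemma super_commutator_G_L:
  "super_commutator (nact s \<alpha> t) (Gb k) (Lb m) v =
     wsmul (- (of_int m - of_int k) / 2) (nact s \<alpha> t (Gb (2 * m + k)) v)"
  by (simp add: super_commutator_swap[of "Lb m"] super_commutator_L_G)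

lemma super_commutator_G_I:
  assumes "odd k"
  shows "super_commutator (nact s \<alpha> t) (Gb l) (Ib k) v =
           wsmul (- 1) (nact s \<alpha> t (Gb (k + l)) v)"
  using assms by (simp add: super_commutator_swap[of "Ib k"] super_commutator_I_G)

lemma nact_super_commutator:
  assumes "tvalid a" and "tvalid b"
  shows "super_commutator (nact s \<alpha> t) a b v =
           foldr (\<lambda>(c, e) acc. wadd (wsmul c (nact s \<alpha> t e v)) acc) (tbr a b) wzero"
proof (cases a; cases b)
  fix k l assume "a = Gb k" "b = Gb l"
  then show ?thesis
    by (cases "even (k + l)") (auto simp: super_commutator_G_G_odd elim!: evenE
        intro: super_commutator_G_G_even)
qed (use assms in \<open>simp_all add: super_commutator_L_L super_commutator_L_I super_commutator_L_G
    super_commutator_I_L super_commutator_I_I super_commutator_I_G super_commutator_G_L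
    super_commutator_G_I\<close>)

lemma nact_is_T_module: "is_T_module (nact s \<alpha> t)"
  unfolding is_T_module_def super_commutator_def[symmetric]
  by (simp add: nact_wadd nact_wsmul nact_weven nact_wodd nact_super_commutator)

end

lemma foldr_wadd_wsmul:
  "foldr (\<lambda>i acc. wadd (wsmul (c i) (F i)) acc) xs wzero =
     (\<Sum>i\<leftarrow>xs. smult (c i) (fst (F i)), \<Sum>i\<leftarrow>xs. smult (c i) (snd (F i)))"
  by (induction xs) (simp_all add: wadd_def wsmul_def wzero_def)

lemma sum_list_coeff_smult_powers:
  fixes p h :: "'a :: comm_ring_1 poly"
  shows "(\<Sum>i\<leftarrow>[0..<Suc (degree p)]. smult (coeff p i) ([:0, 1:] ^ i * h)) = p * h"
proof -
  have "(\<Sum>i\<leftarrow>[0..<Suc (degree p)]. smult (coeff p i) ([:0, 1:] ^ i * h))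
          = (\<Sum>i\<le>degree p. monom (coeff p i) i) * h"
    by (simp del: upt_Suc add: sum_set_upt_conv_sum_list_nat[symmetric] atLeast0LessThan
        lessThan_Suc_atMost monom_altdef sum_distrib_right)
  then show ?thesis by (simp add: poly_as_sum_of_monoms)
qed

context
  fixes \<rho> :: "tbasis \<Rightarrow> wsp \<Rightarrow> wsp"
  assumes L0_multiplication: "\<And>f g. \<rho> (Lb 0) (f, g) = ([:0, 1:] * f, [:0, 1:] * g)"
begin

lemma uL0_act_eq_mult: "uL0_act \<rho> P (f, g) = (P * f, P * g)"
proof -
  have L0_powers: "(\<rho> (Lb 0) ^^ i) (f, g) = ([:0, 1:] ^ i * f, [:0, 1:] ^ i * g)" for i
    by (induction i) (simp_all add: L0_multiplication mult.assoc)
  show ?thesis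
    unfolding uL0_act_def foldr_wadd_wsmul L0_powers fst_conv snd_conv sum_list_coeff_smult_powers ..
qed

lemma free_rank2_UL0_if_L0_multiplication: "free_rank2_UL0 \<rho>"
  unfolding free_rank2_UL0_def
proof (intro exI allI)
  fix v :: wsp
  have "wadd (uL0_act \<rho> (fst PQ) (1, 0)) (uL0_act \<rho> (snd PQ) (0, 1)) = PQ" for PQ
    by (simp add: uL0_act_eq_mult wadd_def)
  then show "\<exists>!PQ. v = wadd (uL0_act \<rho> (fst PQ) (1, 0)) (uL0_act \<rho> (snd PQ) (0, 1))"
    by auto
qed

end

theorem proposition2p8:
  fixes lam s \<alpha> t :: complex
  assumes "lam \<noteq> 0" and "s ^ 2 = lam" and "t = 1 \<or> t = -1"
  shows "is_T_module (nact s \<alpha> t) \<and> free_rank2_UL0 (nact s \<alpha> t)"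
proof
  have "s \<noteq> 0" using assms(1,2) by auto
  moreover have "t ^ 2 = 1" using assms(3) by auto
  ultimately show "is_T_module (nact s \<alpha> t)" by (rule nact_is_T_module)
  have "nact s \<alpha> t (Lb 0) (f, g) = ([:0, 1:] * f, [:0, 1:] * g)" for f g
    by simp
  then show "free_rank2_UL0 (nact s \<alpha> t)" by (rule free_rank2_UL0_if_L0_multiplication)
qed

end
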